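(* A function $r:(0,\infty)\to(0,\infty)$ is of the form $r=r[g]$ for some complete Bernstein function $g$ if and only if $t\mapsto t\,r(t)$ is a Bernstein function.
   Context: A Bernstein function is $h\in C^\infty(0,\infty)$ with $h\ge0$ and $(-1)^nh^{(n)}\le0$ for $n\ge1$; equivalently $h(z)=a+bz+\int_{(0,\infty)}(1-e^{-sz})\mu(\mathrm ds)$ with $a,b\ge0$, $\mu$ positive Radon on $(0,\infty)$, $\int\frac{s}{1+s}\mu(\mathrm ds)<\infty$ (written $h\sim(a,b,\mu)$). It is a complete Bernstein function if $\mu$ has a completely monotone density with respect to Lebesgue measure (completely monotone: $C^\infty$ with $(-1)^nm^{(n)}\ge0$ for all $n\ge0$). For $g\sim(a,b,\mu)$, the rate function is $r[g](t):=\frac a2+\frac bt+\int_{(0,\infty)}\min(s/t,1)\mu(\mathrm ds)$, $t>0$. *)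

theory Defs
  imports "HOL-Analysis.Analysis"
begin

definition bernstein :: "(real \<Rightarrow> real) \<Rightarrow> bool" where
  "bernstein h \<longleftrightarrow>
     (\<forall>n x. x > 0 \<longrightarrow> ((deriv ^^ n) h) differentiable (at x)) \<and>
     (\<forall>x>0. h x \<ge> 0) \<and>
     (\<forall>n\<ge>1. \<forall>x>0. (-1) ^ n * (deriv ^^ n) h x \<le> 0)"

definition completely_monotone :: "(real \<Rightarrow> real) \<Rightarrow> bool" where
  "completely_monotone m \<longleftrightarrow>
     (\<forall>n x. x > 0 \<longrightarrow> ((deriv ^^ n) m) differentiable (at x)) \<and>
     (\<forall>n. \<forall>x>0. (-1) ^ n * (deriv ^^ n) m x \<ge> 0)"

text \<open>g is a complete Bernstein function with Levy triple (a, b, mu), where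
  mu(ds) = m(s) ds on (0,infinity) with m completely monotone.\<close>
definition cbf_triple :: "(real \<Rightarrow> real) \<Rightarrow> real \<Rightarrow> real \<Rightarrow> (real \<Rightarrow> real) \<Rightarrow> bool" where
  "cbf_triple g a b m \<longleftrightarrow>
     a \<ge> 0 \<and> b \<ge> 0 \<and> completely_monotone m \<and>
     set_integrable lborel {0<..} (\<lambda>s. s / (1 + s) * m s) \<and>
     (\<forall>z>0. g z = a + b * z + (LINT s:{0<..}|lborel. (1 - exp (- s * z)) * m s))"

definition rate_fn :: "real \<Rightarrow> real \<Rightarrow> (real \<Rightarrow> real) \<Rightarrow> real \<Rightarrow> real" where
  "rate_fn a b m t = a / 2 + b / t + (LINT s:{0<..}|lborel. min (s / t) 1 * m s)"

end

theory Submission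
  imports Defs
begin

(* Both directions rest on the identity, for t > 0 and mu(ds) = m(s) ds,
     [R]   t r[g](t) = a t / 2 + b + int_0^t s m(s) ds + t int_t^oo m(s) ds,
   which gives (t r(t))' = a/2 + int_t^oo m >= 0 and (t r(t))'' = - m(t).  Since a function
   h >= 0 with h' >= 0 is Bernstein iff - h'' is completely monotone, this settles the
   forward direction.  Conversely, for a Bernstein h put m = - h'', b = h(0+), a = 2 h'(oo).
   The fundamental theorem of calculus gives int_t^oo m = h'(t) - h'(oo) and, as
   t h'(t) -> 0 for t -> 0+, int_0^t s m(s) ds = h(t) - t h'(t) - h(0+).  Hence m satisfies
   the Levy integrability condition and [R] yields h(t) = t r[g](t). *)

subsection \<open>Iterated derivatives on the open half-line\<close>

text \<open>All notions involved only look at the values on \<open>(0,\<infinity>)\<close>, an open set; so derivatives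
  of functions agreeing there agree there too.\<close>

lemma eventually_pos_nhds: "(x::real) > 0 \<Longrightarrow> eventually (\<lambda>y. y > 0) (nhds x)"
  by (rule eventually_nhds_in_open[of "{0<..}", simplified]) auto

lemma differentiable_at_cong_pos:
  fixes f g :: "real \<Rightarrow> real"
  assumes "f differentiable at x" "x > 0" "\<forall>y>0. f y = g y"
  shows "g differentiable at x"
proof -
  have "DERIV f x :> deriv f x" using assms(1) DERIV_deriv_iff_real_differentiable by blast
  then have "DERIV g x :> deriv f x"
    by (rule has_field_derivative_transform_within_open[where S="{0<..}"]) (use assms in auto)
  then show ?thesis using real_differentiable_def by blast
qed

lemma deriv_iter_cong_pos:
  fixes f g :: "real \<Rightarrow> real"
  assumes "\<forall>x>0. f x = g x"
  shows "\<forall>x>0. (deriv ^^ n) f x = (deriv ^^ n) g x"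
proof (induction n)
  case 0 then show ?case using assms by simp
next
  case (Suc n)
  show ?case
  proof (intro allI impI)
    fix x :: real assume x: "x > 0"
    have "eventually (\<lambda>y. (deriv ^^ n) f y = (deriv ^^ n) g y) (nhds x)"
      using eventually_pos_nhds[OF x] Suc by (auto elim: eventually_mono)
    then show "(deriv ^^ Suc n) f x = (deriv ^^ Suc n) g x"
      by (simp add: deriv_cong_ev)
  qed
qed

lemma bernstein_cong_pos:
  assumes "bernstein f" "\<forall>x>0. f x = g x"
  shows "bernstein g"
  unfolding bernstein_def
proof (intro conjI allI impI)
  fix n :: nat and x :: real assume x: "x > 0"
  have "((deriv ^^ n) f) differentiable (at x)" using assms(1) x unfolding bernstein_def by blast
  then show "((deriv ^^ n) g) differentiable (at x)"
    by (rule differentiable_at_cong_pos[OF _ x deriv_iter_cong_pos[OF assms(2)]])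
next
  fix x :: real assume "x > 0"
  then show "g x \<ge> 0" using assms unfolding bernstein_def by auto
next
  fix n :: nat and x :: real assume "n \<ge> 1" "x > 0"
  then show "(-1) ^ n * (deriv ^^ n) g x \<le> 0"
    using assms(1) deriv_iter_cong_pos[OF assms(2), of n] unfolding bernstein_def by auto
qed

lemma deriv_iter_uminus:
  fixes f :: "real \<Rightarrow> real"
  assumes "\<forall>n x. x > 0 \<longrightarrow> ((deriv ^^ n) f) differentiable (at x)"
  shows "\<forall>x>0. (deriv ^^ n) (\<lambda>x. - f x) x = - (deriv ^^ n) f x"
proof (induction n)
  case 0 then show ?case by simp
next
  case (Suc n)
  show ?case
  proof (intro allI impI)
    fix x :: real assume x: "x > 0"
    have "eventually (\<lambda>y. (deriv ^^ n) (\<lambda>x. - f x) y = - (deriv ^^ n) f y) (nhds x)"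
      using eventually_pos_nhds[OF x] Suc by (auto elim: eventually_mono)
    then have "deriv ((deriv ^^ n) (\<lambda>x. - f x)) x = deriv (\<lambda>y. - (deriv ^^ n) f y) x"
      by (rule deriv_cong_ev) simp
    also have "\<dots> = - deriv ((deriv ^^ n) f) x"
    proof (rule deriv_minus)
      have "DERIV ((deriv ^^ n) f) x :> deriv ((deriv ^^ n) f) x"
        using assms x DERIV_deriv_iff_real_differentiable by blast
      then show "(deriv ^^ n) f field_differentiable at x"
        unfolding field_differentiable_def by blast
    qed
    finally show "(deriv ^^ Suc n) (\<lambda>x. - f x) x = - (deriv ^^ Suc n) f x" by simp
  qed
qed

lemma deriv_iter_add2: "(deriv ^^ (n + 2)) h = (deriv ^^ n) (deriv (deriv h))"
  unfolding funpow_add by (simp add: numeral_2_eq_2)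

text \<open>A nonnegative, nondecreasing function whose second derivative is \<open>- m\<close> with \<open>m\<close>
  completely monotone is Bernstein: its derivative of order \<open>n + 2\<close> is minus the \<open>n\<close>-th
  derivative of \<open>m\<close>.\<close>

lemma bernstein_of_second_derivative:
  fixes h hd m :: "real \<Rightarrow> real"
  assumes dh: "\<And>x. x > 0 \<Longrightarrow> (h has_real_derivative hd x) (at x)"
    and dhd: "\<And>x. x > 0 \<Longrightarrow> (hd has_real_derivative - m x) (at x)"
    and cm: "completely_monotone m"
    and h_nonneg: "\<forall>x>0. h x \<ge> 0" and hd_nonneg: "\<forall>x>0. hd x \<ge> 0"
  shows "bernstein h"
proof -
  have m_smooth: "\<forall>n x. x > 0 \<longrightarrow> ((deriv ^^ n) m) differentiable (at x)"
   and m_sign: "\<forall>n. \<forall>x>0. (-1) ^ n * (deriv ^^ n) m x \<ge> 0"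
    using cm unfolding completely_monotone_def by auto
  have d1: "\<forall>x>0. deriv h x = hd x" using dh DERIV_imp_deriv by blast
  have d2: "\<forall>x>0. deriv (deriv h) x = - m x"
  proof (intro allI impI)
    fix x :: real assume x: "x > 0"
    have "deriv (deriv h) x = deriv hd x"
      by (rule deriv_cong_ev) (use eventually_pos_nhds[OF x] d1 in \<open>auto elim: eventually_mono\<close>)
    then show "deriv (deriv h) x = - m x" using dhd[OF x] DERIV_imp_deriv by simp
  qed
  have dn: "\<forall>x>0. (deriv ^^ (n + 2)) h x = - (deriv ^^ n) m x" for n
    unfolding deriv_iter_add2
    using deriv_iter_cong_pos[OF d2, of n] deriv_iter_uminus[OF m_smooth, of n] by simp
  have diff: "((deriv ^^ n) h) differentiable (at x)" if x: "x > 0" for n x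
  proof -
    consider "n = 0" | "n = 1" | k where "n = k + 2"
      by (metis One_nat_def add_2_eq_Suc' not0_implies_Suc)
    then show ?thesis
    proof cases
      case 1 then show ?thesis using dh[OF x] real_differentiable_def by auto
    next
      case 2
      have "hd differentiable at x" using dhd[OF x] real_differentiable_def by blast
      then show ?thesis using 2 differentiable_at_cong_pos[of hd x "deriv h"] x d1 by auto
    next
      case 3
      have "(\<lambda>y. - (deriv ^^ k) m y) differentiable at x" using m_smooth x by auto
      moreover have "\<forall>y>0. (\<lambda>y. - (deriv ^^ k) m y) y = (deriv ^^ n) h y"
        using dn[of k] 3 by (simp only:) simp
      ultimately show ?thesis by (rule differentiable_at_cong_pos[OF _ x])
    qed
  qed
  have sign: "(-1) ^ n * (deriv ^^ n) h x \<le> 0" if "n \<ge> 1" "x > 0" for n x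
  proof -
    consider "n = 1" | k where "n = k + 2"
      using \<open>n \<ge> 1\<close> by (metis One_nat_def add_2_eq_Suc' le_Suc_eq le_zero_eq not0_implies_Suc)
    then show ?thesis
    proof cases
      case 1 then show ?thesis using d1 hd_nonneg that by auto
    next
      case 2
      have "(deriv ^^ n) h x = - (deriv ^^ k) m x" using dn[of k] that unfolding 2 by blast
      moreover have "(-1) ^ n = ((-1) ^ k :: real)" using 2 by simp
      moreover have "0 \<le> (-1) ^ k * (deriv ^^ k) m x" using m_sign that by blast
      ultimately show ?thesis by simp
    qed
  qed
  show ?thesis unfolding bernstein_def using diff sign h_nonneg by auto
qed

lemma completely_monotone_second_derivative:
  fixes h :: "real \<Rightarrow> real"
  assumes "bernstein h"
  shows "completely_monotone (\<lambda>x. - deriv (deriv h) x)"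
proof -
  have h_smooth: "\<forall>n x. x > 0 \<longrightarrow> ((deriv ^^ n) h) differentiable (at x)"
   and h_sign: "\<forall>n\<ge>1. \<forall>x>0. (-1) ^ n * (deriv ^^ n) h x \<le> 0"
    using assms unfolding bernstein_def by auto
  have h2_smooth: "\<forall>n x. x > 0 \<longrightarrow> ((deriv ^^ n) (deriv (deriv h))) differentiable (at x)"
    using h_smooth by (metis deriv_iter_add2)
  have eq: "\<forall>x>0. (deriv ^^ n) (\<lambda>x. - deriv (deriv h) x) x = - (deriv ^^ (n + 2)) h x" for n
    unfolding deriv_iter_add2 using deriv_iter_uminus[OF h2_smooth, of n] by simp
  have "((deriv ^^ n) (\<lambda>x. - deriv (deriv h) x)) differentiable (at x)" if "x > 0" for n x
  proof (rule differentiable_at_cong_pos[OF _ that])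
    show "(\<lambda>y. - (deriv ^^ (n + 2)) h y) differentiable at x"
      by (rule differentiable_minus, rule h_smooth[rule_format, OF that])
    show "\<forall>y>0. - (deriv ^^ (n + 2)) h y = (deriv ^^ n) (\<lambda>x. - deriv (deriv h) x) y"
      using eq[of n] by metis
  qed
  moreover have "(-1) ^ n * (deriv ^^ n) (\<lambda>x. - deriv (deriv h) x) x \<ge> 0" if "x > 0" for n x
  proof -
    have "n + 2 \<ge> 1" by simp
    then have "(-1) ^ (n + 2) * (deriv ^^ (n + 2)) h x \<le> 0" using h_sign that by blast
    moreover have "(-1) ^ (n + 2) = ((-1) ^ n :: real)" by simp
    ultimately show ?thesis using eq[of n] that by simp
  qed
  ultimately show ?thesis unfolding completely_monotone_def by auto
qed

lemma completely_monotone_continuous_nonneg: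
  fixes m :: "real \<Rightarrow> real"
  assumes "completely_monotone m"
  shows "continuous_on {0<..} m" "\<forall>s>0. m s \<ge> 0"
proof -
  have "\<forall>x>0. m differentiable at x"
    using assms unfolding completely_monotone_def by (metis funpow_0)
  then show "continuous_on {0<..} m"
    by (intro continuous_at_imp_continuous_on ballI differentiable_imp_continuous_within) auto
  show "\<forall>s>0. m s \<ge> 0"
    using assms unfolding completely_monotone_def by (metis funpow_0 mult_1 power_0)
qed

subsection \<open>Integrability under the Levy condition\<close>

lemma set_borel_measurable_continuous_on_open:
  fixes g :: "real \<Rightarrow> real"
  assumes "continuous_on A g" "open A"
  shows "set_borel_measurable lborel A g"
  unfolding set_borel_measurable_def
  using borel_measurable_continuous_on_indicator[OF _ assms(1)] assms(2) by simp

lemma levy_integrable_bound: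
  fixes m g :: "real \<Rightarrow> real"
  assumes levy: "set_integrable lborel {0<..} (\<lambda>s. s / (1 + s) * m s)"
    and A: "A \<subseteq> {0<..}" "open A" and cg: "continuous_on A g"
    and bound: "\<And>s. s \<in> A \<Longrightarrow> \<bar>g s\<bar> \<le> C * (s / (1 + s) * m s)"
  shows "set_integrable lborel A g"
proof (rule set_integrable_bound[where f="\<lambda>s. C * (s / (1 + s) * m s)"])
  have "set_integrable lborel A (\<lambda>s. s / (1 + s) * m s)"
    by (rule set_integrable_subset[OF levy]) (use A in auto)
  then show "set_integrable lborel A (\<lambda>s. C * (s / (1 + s) * m s))"
    by (rule set_integrable_mult_right)
  show "set_borel_measurable lborel A g" by (rule set_borel_measurable_continuous_on_open[OF cg A(2)])
  show "AE x in lborel. x \<in> A \<longrightarrow> norm (g x) \<le> norm (C * (x / (1 + x) * m x))"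
    using bound by (intro AE_I2 impI) (smt (verit) real_norm_def)
qed

lemma levy_integrable_tail:
  fixes m :: "real \<Rightarrow> real"
  assumes levy: "set_integrable lborel {0<..} (\<lambda>s. s / (1 + s) * m s)"
    and cm: "continuous_on {0<..} m" and nn: "\<forall>s>0. m s \<ge> 0" and c: "c > 0"
  shows "set_integrable lborel {c<..} m"
proof (rule levy_integrable_bound[OF levy, where C="(1 + c) / c"])
  show "continuous_on {c<..} m" by (rule continuous_on_subset[OF cm]) (use c in auto)
  fix s assume s: "s \<in> {c<..}"
  then have s0: "s > 0" "m s \<ge> 0" using c nn by auto
  have "c * (1 + s) \<le> (1 + c) * s" using s by (simp add: algebra_simps)
  then have "1 \<le> ((1 + c) * s) / (c * (1 + s))" using s0 c by (simp add: le_divide_eq_1_pos)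
  then have "1 \<le> (1 + c) / c * (s / (1 + s))" by simp
  then have "1 * m s \<le> ((1 + c) / c * (s / (1 + s))) * m s"
    by (rule mult_right_mono) (use s0 in auto)
  then show "\<bar>m s\<bar> \<le> (1 + c) / c * (s / (1 + s) * m s)" using s0 by simp
qed (use c in auto)

lemma levy_integrable_head:
  fixes m :: "real \<Rightarrow> real"
  assumes levy: "set_integrable lborel {0<..} (\<lambda>s. s / (1 + s) * m s)"
    and cm: "continuous_on {0<..} m" and nn: "\<forall>s>0. m s \<ge> 0"
  shows "set_integrable lborel {0<..<T} (\<lambda>s. s * m s)"
proof (rule levy_integrable_bound[OF levy, where C="1 + T"])
  show "continuous_on {0<..<T} (\<lambda>s. s * m s)"
    by (intro continuous_intros continuous_on_subset[OF cm]) auto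
  fix s assume s: "s \<in> {0<..<T}"
  then have s0: "s > 0" "m s \<ge> 0" "s < T" using nn by auto
  have "s \<le> (1 + T) * (s / (1 + s))"
    using s0 by (simp add: field_simps)
  then have "s * m s \<le> ((1 + T) * (s / (1 + s))) * m s"
    by (rule mult_right_mono) (use s0 in auto)
  then show "\<bar>s * m s\<bar> \<le> (1 + T) * (s / (1 + s) * m s)" using s0 by simp
qed auto

lemma levy_integrable_min:
  fixes m :: "real \<Rightarrow> real"
  assumes levy: "set_integrable lborel {0<..} (\<lambda>s. s / (1 + s) * m s)"
    and cm: "continuous_on {0<..} m" and nn: "\<forall>s>0. m s \<ge> 0" and t: "t > 0"
  shows "set_integrable lborel {0<..} (\<lambda>s. min s t * m s)"
proof (rule levy_integrable_bound[OF levy, where C="1 + t"])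
  show "continuous_on {0<..} (\<lambda>s. min s t * m s)"
    by (intro continuous_intros cm)
  fix s :: real assume s: "s \<in> {0<..}"
  then have s0: "s > 0" "m s \<ge> 0" using nn by auto
  have "min s t * (1 + s) \<le> (1 + t) * s"
  proof (cases "s \<le> t")
    case True
    then have "s * s \<le> t * s" using s0 by (intro mult_right_mono) auto
    then show ?thesis using True by (simp add: min_def algebra_simps)
  qed (simp add: min_def algebra_simps)
  then have "min s t \<le> (1 + t) * (s / (1 + s))" using s0 by (simp add: field_simps)
  then have "min s t * m s \<le> ((1 + t) * (s / (1 + s))) * m s"
    by (rule mult_right_mono) (use s0 in auto)
  moreover have "0 \<le> min s t * m s" using s0 t by simp
  ultimately show "\<bar>min s t * m s\<bar> \<le> (1 + t) * (s / (1 + s) * m s)" by simp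
qed auto

subsection \<open>The identity [R] for the rate function\<close>

lemma rate_fn_nonneg:
  assumes "a \<ge> 0" "b \<ge> 0" "\<forall>s>0. m s \<ge> 0" "t > 0"
  shows "rate_fn a b m t \<ge> 0"
proof -
  have "0 \<le> (LINT s:{0<..}|lborel. min (s / t) 1 * m s)"
    unfolding set_lebesgue_integral_def
    by (rule Bochner_Integration.integral_nonneg) (use assms in \<open>auto simp: indicator_def\<close>)
  then show ?thesis using assms unfolding rate_fn_def by simp
qed

text \<open>Multiplying by \<open>t\<close> turns \<open>min (s / t) 1\<close> into \<open>min s t\<close>; splitting the integral of
  \<open>min s t * m s\<close> at \<open>t\<close> gives [R].\<close>

lemma rate_fn_scaled:
  fixes m :: "real \<Rightarrow> real"
  assumes t: "t > 0"
  shows "t * rate_fn a b m t = a * t / 2 + b + (LINT s:{0<..}|lborel. min s t * m s)"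
proof -
  have "t * (LINT s:{0<..}|lborel. min (s / t) 1 * m s)
      = (LINT s:{0<..}|lborel. t * (min (s / t) 1 * m s))"
    by (rule set_integral_mult_right[symmetric])
  also have "\<dots> = (LINT s:{0<..}|lborel. min s t * m s)"
    by (rule set_lebesgue_integral_cong) (use t in \<open>auto simp: min_def field_simps\<close>)
  finally show ?thesis using t unfolding rate_fn_def by (simp add: field_simps)
qed

lemma rate_fn_decomposition:
  fixes m :: "real \<Rightarrow> real"
  assumes levy: "set_integrable lborel {0<..} (\<lambda>s. s / (1 + s) * m s)"
    and cm: "continuous_on {0<..} m" and nn: "\<forall>s>0. m s \<ge> 0" and t: "t > 0"
  shows "t * rate_fn a b m t
       = a * t / 2 + b + (LBINT s=ereal 0..ereal t. s * m s) + t * (LBINT s=ereal t..\<infinity>. m s)"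
proof -
  have int: "set_integrable lborel {0<..} (\<lambda>s. min s t * m s)"
    by (rule levy_integrable_min[OF assms])
  have "(LINT s:{0<..}|lborel. min s t * m s) = (LBINT s=ereal 0..\<infinity>. min s t * m s)"
    by (rule interval_integral_to_infinity_eq[symmetric])
  also have "\<dots> = (LBINT s=ereal 0..ereal t. min s t * m s) + (LBINT s=ereal t..\<infinity>. min s t * m s)"
    by (rule interval_integral_sum[symmetric])
       (use t int in \<open>simp add: interval_lebesgue_integrable_def min_def max_def\<close>)
  also have "(LBINT s=ereal 0..ereal t. min s t * m s) = (LBINT s=ereal 0..ereal t. s * m s)"
    by (rule interval_integral_cong) (use t in \<open>auto simp: einterval_iff min_def\<close>)
  also have "(LBINT s=ereal t..\<infinity>. min s t * m s) = (LBINT s=ereal t..\<infinity>. t * m s)"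
    by (rule interval_integral_cong) (auto simp: einterval_iff min_def)
  also have "\<dots> = t * (LBINT s=ereal t..\<infinity>. m s)" by simp
  finally show ?thesis using rate_fn_scaled[OF t] by simp
qed

lemma interval_integral_has_derivative:
  fixes f :: "real \<Rightarrow> real"
  assumes cf: "continuous_on {0<..} f" and t: "t > 0"
  shows "((\<lambda>u. LBINT s=ereal 1..ereal u. f s) has_real_derivative f t) (at t)"
proof -
  define a where "a = min t 1 / 2"
  define b where "b = max t 1 + 1"
  have ab: "0 < a" "a < t" "t < b" "a \<le> 1" "1 \<le> b" using t by (auto simp: a_def b_def)
  have "continuous_on {a..b} f" by (rule continuous_on_subset[OF cf]) (use ab in auto)
  then have "((\<lambda>u. LBINT y=ereal 1..ereal u. f y) has_vector_derivative (f t)) (at t within {a..b})"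
    by (intro interval_integral_FTC2) (use ab in auto)
  then show ?thesis
    using at_within_Icc_at[of a t b] ab by (simp add: has_real_derivative_iff_has_vector_derivative)
qed

lemma tail_integral_has_derivative:
  fixes m :: "real \<Rightarrow> real"
  assumes levy: "set_integrable lborel {0<..} (\<lambda>s. s / (1 + s) * m s)"
    and cm: "continuous_on {0<..} m" and nn: "\<forall>s>0. m s \<ge> 0" and t: "t > 0"
  shows "((\<lambda>u. LBINT s=ereal u..\<infinity>. m s) has_real_derivative - m t) (at t)"
proof -
  have split: "(LBINT s=ereal u..\<infinity>. m s)
      = (LBINT s=ereal 1..\<infinity>. m s) - (LBINT s=ereal 1..ereal u. m s)" if u: "u > 0" for u
  proof -
    have "(LBINT s=ereal u..ereal 1. m s) + (LBINT s=ereal 1..\<infinity>. m s)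
        = (LBINT s=ereal u..\<infinity>. m s)"
    proof (rule interval_integral_sum)
      have "set_integrable lborel {min u 1<..} m"
        by (rule levy_integrable_tail[OF levy cm nn]) (use u in auto)
      moreover have ends: "min (ereal u) (min (ereal 1) \<infinity>) = ereal (min u 1)"
        "max (ereal u) (max (ereal 1) \<infinity>) = \<infinity>" by simp_all
      ultimately show "interval_lebesgue_integrable lborel (min (ereal u) (min (ereal 1) \<infinity>))
          (max (ereal u) (max (ereal 1) \<infinity>)) m"
        unfolding interval_lebesgue_integrable_def ends einterval_eq_Ici by simp
    qed
    then show ?thesis using interval_integral_endpoints_reverse[of "ereal u" "ereal 1" m] by simp
  qed
  have "((\<lambda>u. (LBINT s=ereal 1..\<infinity>. m s) - (LBINT s=ereal 1..ereal u. m s))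
      has_real_derivative - m t) (at t)"
    using DERIV_diff[OF DERIV_const interval_integral_has_derivative[OF cm t]] by simp
  then show ?thesis
    by (rule has_field_derivative_transform_within_open[where S="{0<..}"])
       (use t in \<open>auto simp: split[symmetric]\<close>)
qed

lemma head_integral_has_derivative:
  fixes m :: "real \<Rightarrow> real"
  assumes levy: "set_integrable lborel {0<..} (\<lambda>s. s / (1 + s) * m s)"
    and cm: "continuous_on {0<..} m" and nn: "\<forall>s>0. m s \<ge> 0" and t: "t > 0"
  shows "((\<lambda>u. LBINT s=ereal 0..ereal u. s * m s) has_real_derivative t * m t) (at t)"
proof -
  have cf: "continuous_on {0<..} (\<lambda>s. s * m s)" by (intro continuous_intros cm)
  have split: "(LBINT s=ereal 0..ereal u. s * m s)
      = (LBINT s=ereal 0..ereal 1. s * m s) + (LBINT s=ereal 1..ereal u. s * m s)"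
    if u: "u > 0" for u
  proof (rule interval_integral_sum[symmetric])
    have "set_integrable lborel {0<..<max 1 u} (\<lambda>s. s * m s)"
      by (rule levy_integrable_head[OF levy cm nn])
    then show "interval_lebesgue_integrable lborel (min (ereal 0) (min (ereal 1) (ereal u)))
        (max (ereal 0) (max (ereal 1) (ereal u))) (\<lambda>s. s * m s)"
      using u by (auto simp: interval_lebesgue_integrable_def min_def max_def split: if_splits)
  qed
  have "((\<lambda>u. (LBINT s=ereal 0..ereal 1. s * m s) + (LBINT s=ereal 1..ereal u. s * m s))
      has_real_derivative t * m t) (at t)"
    using DERIV_add[OF DERIV_const interval_integral_has_derivative[OF cf t]] by simp
  then show ?thesis
    by (rule has_field_derivative_transform_within_open[where S="{0<..}"])
       (use t in \<open>auto simp: split[symmetric]\<close>)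
qed

subsection \<open>The forward direction\<close>

text \<open>By [R], \<open>h(t) = t r(t)\<close> has \<open>h' = a/2 + \<integral>\<^sub>t\<^sup>\<infinity> m\<close> and \<open>h'' = - m\<close>.\<close>

lemma bernstein_scaled_rate_fn:
  assumes cbf: "cbf_triple g a b m"
  shows "bernstein (\<lambda>t. t * rate_fn a b m t)"
proof -
  have a: "a \<ge> 0" and b: "b \<ge> 0" and cmm: "completely_monotone m"
    and levy: "set_integrable lborel {0<..} (\<lambda>s. s / (1 + s) * m s)"
    using cbf unfolding cbf_triple_def by auto
  note cm = completely_monotone_continuous_nonneg(1)[OF cmm]
    and nn = completely_monotone_continuous_nonneg(2)[OF cmm]
  define G where "G u = (LBINT s=ereal u..\<infinity>. m s)" for u
  define H where "H u = (LBINT s=ereal 0..ereal u. s * m s)" for u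
  have G_nonneg: "G u \<ge> 0" if "u > 0" for u
  proof -
    have "0 \<le> (LINT s:{u<..}|lborel. m s)" unfolding set_lebesgue_integral_def
      by (rule Bochner_Integration.integral_nonneg) (use that nn in \<open>auto simp: indicator_def\<close>)
    then show ?thesis unfolding G_def by (simp add: interval_integral_to_infinity_eq)
  qed
  have dG: "(G has_real_derivative - m x) (at x)" if "x > 0" for x
    using tail_integral_has_derivative[OF levy cm nn that] unfolding G_def .
  show ?thesis
  proof (rule bernstein_of_second_derivative[where hd="\<lambda>u. a / 2 + G u" and m=m])
    fix x :: real assume x: "x > 0"
    have "((\<lambda>t. a * t / 2 + b + H t + t * G t) has_real_derivative
           a * 1 / 2 + 0 + x * m x + (1 * G x + (- m x) * x)) (at x)"
      by (intro DERIV_add DERIV_mult DERIV_const DERIV_ident DERIV_cdivide DERIV_cmult dG[OF x]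
          head_integral_has_derivative[OF levy cm nn x, folded H_def])
    then have "((\<lambda>t. a * t / 2 + b + H t + t * G t) has_real_derivative a / 2 + G x) (at x)"
      by (simp add: algebra_simps)
    then show "((\<lambda>t. t * rate_fn a b m t) has_real_derivative a / 2 + G x) (at x)"
      by (rule has_field_derivative_transform_within_open[where S="{0<..}"])
         (use x rate_fn_decomposition[OF levy cm nn] in \<open>auto simp: G_def H_def\<close>)
    show "((\<lambda>u. a / 2 + G u) has_real_derivative - m x) (at x)"
      using DERIV_add[OF DERIV_const dG[OF x]] by simp
  next
    show "\<forall>x>0. x * rate_fn a b m x \<ge> 0" using rate_fn_nonneg[OF a b nn] by simp
    show "\<forall>x>0. a / 2 + G x \<ge> 0" using a G_nonneg by (auto intro: add_nonneg_nonneg)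
  qed (rule cmm)
qed

subsection \<open>Limits and integral identities for Bernstein functions\<close>

lemma bernstein_derivatives:
  assumes "bernstein h" "x > 0"
  shows "DERIV h x :> deriv h x" "DERIV (deriv h) x :> deriv (deriv h) x"
    and "isCont (deriv (deriv h)) x" "deriv h x \<ge> 0" "deriv (deriv h) x \<le> 0"
proof -
  have smooth: "((deriv ^^ n) h) differentiable (at x)" for n
    using assms unfolding bernstein_def by blast
  have sign: "(-1) ^ n * (deriv ^^ n) h x \<le> 0" if "n \<ge> 1" for n
    using assms that unfolding bernstein_def by blast
  show "DERIV h x :> deriv h x" using smooth[of 0] by (simp add: DERIV_deriv_iff_real_differentiable)
  show "DERIV (deriv h) x :> deriv (deriv h) x"
    using smooth[of 1] by (simp add: DERIV_deriv_iff_real_differentiable)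
  show "isCont (deriv (deriv h)) x"
    using smooth[of 2] by (simp add: numeral_2_eq_2 differentiable_imp_continuous_within)
  show "deriv h x \<ge> 0" using sign[of 1] by simp
  show "deriv (deriv h) x \<le> 0" using sign[of 2] by (simp add: numeral_2_eq_2)
qed

lemma bernstein_mono:
  assumes "bernstein h" "0 < x" "x \<le> y"
  shows "h x \<le> h y"
proof (rule DERIV_nonneg_imp_nondecreasing[OF assms(3)])
  fix z assume "x \<le> z"
  then have "z > 0" using assms(2) by linarith
  then show "\<exists>d. DERIV h z :> d \<and> d \<ge> 0" using bernstein_derivatives(1,4)[OF assms(1)] by blast
qed

lemma bernstein_deriv_antimono:
  assumes "bernstein h" "0 < x" "x \<le> y"
  shows "deriv h y \<le> deriv h x"
proof (rule DERIV_nonpos_imp_nonincreasing[OF assms(3)])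
  fix z assume "x \<le> z"
  then have "z > 0" using assms(2) by linarith
  then show "\<exists>d. DERIV (deriv h) z :> d \<and> d \<le> 0"
    using bernstein_derivatives(2,5)[OF assms(1)] by blast
qed

lemma mono_tendsto_Inf_at_right_0:
  fixes f :: "real \<Rightarrow> real"
  assumes mono: "\<And>x y. 0 < x \<Longrightarrow> x \<le> y \<Longrightarrow> f x \<le> f y" and bound: "\<And>x. 0 < x \<Longrightarrow> K \<le> f x"
  shows "(f \<longlongrightarrow> Inf (f ` {0<..})) (at_right 0)"
  using Lim_right_bound[of UNIV 0 f K] assms by simp

lemma antimono_tendsto_Inf_at_top:
  fixes f :: "real \<Rightarrow> real"
  assumes antimono: "\<And>x y. 0 < x \<Longrightarrow> x \<le> y \<Longrightarrow> f y \<le> f x" and bound: "\<And>x. 0 < x \<Longrightarrow> K \<le> f x"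
  shows "(f \<longlongrightarrow> Inf (f ` {0<..})) at_top"
proof (rule decreasing_tendsto)
  have bdd: "bdd_below (f ` {0<..})" using bound by (intro bdd_belowI[where m=K]) auto
  show "\<forall>\<^sub>F x in at_top. Inf (f ` {0<..}) \<le> f x"
    using eventually_gt_at_top[of 0] by eventually_elim (use bdd in \<open>auto intro: cInf_lower\<close>)
  fix y assume "Inf (f ` {0<..}) < y"
  then obtain z where z: "z > 0" "f z < y" by (subst (asm) cInf_less_iff) (use bdd in auto)
  show "\<forall>\<^sub>F x in at_top. f x < y"
    using eventually_ge_at_top[of z] by eventually_elim (use z antimono in force)
qed

text \<open>For a Bernstein function, \<open>t h'(t) \<rightarrow> 0\<close> as \<open>t \<rightarrow> 0+\<close>: by the mean value theorem and the
  monotonicity of \<open>h'\<close>, \<open>t h'(t) / 2 \<le> h(t) - h(t/2) \<le> h(t) - h(0+)\<close>.\<close>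

lemma bernstein_times_deriv_tendsto_0:
  assumes bh: "bernstein h" and lim: "(h \<longlongrightarrow> B) (at_right 0)"
    and lower: "\<And>x. 0 < x \<Longrightarrow> B \<le> h x"
  shows "((\<lambda>s. s * deriv h s) \<longlongrightarrow> 0) (at_right 0)"
proof (rule tendsto_sandwich[where f="\<lambda>_. 0" and h="\<lambda>s. 2 * (h s - B)"])
  have bound: "s * deriv h s \<le> 2 * (h s - B)" if s: "s > 0" for s
  proof -
    obtain z where z: "s / 2 < z" "z < s" "h s - h (s / 2) = (s - s / 2) * deriv h z"
      using MVT2[of "s / 2" s h "deriv h"] bernstein_derivatives(1)[OF bh] s by force
    have "(s / 2) * deriv h s \<le> (s / 2) * deriv h z"
      using bernstein_deriv_antimono[OF bh, of z s] z s by (intro mult_left_mono) auto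
    also have "\<dots> \<le> h s - B" using z lower[of "s / 2"] s by simp
    finally show ?thesis by simp
  qed
  have pos: "\<forall>\<^sub>F s in at_right (0::real). s > 0" by (simp add: eventually_at_right_less)
  show "\<forall>\<^sub>F s in at_right 0. 0 \<le> s * deriv h s"
    using pos by eventually_elim (use bernstein_derivatives(4)[OF bh] in auto)
  show "\<forall>\<^sub>F s in at_right 0. s * deriv h s \<le> 2 * (h s - B)"
    using pos by eventually_elim (rule bound)
  have "((\<lambda>s. 2 * (h s - B)) \<longlongrightarrow> 2 * (B - B)) (at_right 0)"
    by (intro tendsto_intros lim)
  then show "((\<lambda>s. 2 * (h s - B)) \<longlongrightarrow> 0) (at_right 0)" by simp
qed simp

text \<open>The fundamental theorem of calculus for the nonnegative function \<open>- h''\<close>: with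
  \<open>L = h'(\<infinity>)\<close> one has \<open>\<integral>\<^sub>t\<^sup>\<infinity> -h'' = h'(t) - L\<close>, and with \<open>B = h(0+)\<close> one has
  \<open>\<integral>\<^sub>0\<^sup>t -s h''(s) ds = h(t) - t h'(t) - B\<close>, the primitive being \<open>h(s) - s h'(s)\<close>.\<close>

lemma bernstein_tail_integral:
  assumes bh: "bernstein h" and lim: "(deriv h \<longlongrightarrow> L) at_top" and t: "t > 0"
  shows "set_integrable lborel {t<..} (\<lambda>s. - deriv (deriv h) s)"
    and "(LBINT s=ereal t..\<infinity>. - deriv (deriv h) s) = deriv h t - L"
proof -
  have F: "DERIV (\<lambda>s. - deriv h s) x :> - deriv (deriv h) x" if "ereal t < ereal x" for x
    using that t DERIV_minus[OF bernstein_derivatives(2)[OF bh]] by simp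
  have C: "isCont (\<lambda>s. - deriv (deriv h) s) x" if "ereal t < ereal x" for x
    using that t bernstein_derivatives(3)[OF bh] by (simp add: continuous_minus)
  have N: "AE x in lborel. ereal t < ereal x \<longrightarrow> ereal x < \<infinity> \<longrightarrow> 0 \<le> - deriv (deriv h) x"
    using bernstein_derivatives(5)[OF bh] t by (intro AE_I2) auto
  have "isCont (deriv h) t" using bernstein_derivatives(2)[OF bh t] by (rule DERIV_isCont)
  then have "((\<lambda>s. - deriv h s) \<longlongrightarrow> - deriv h t) (at_right t)"
    by (intro tendsto_minus) (simp add: isCont_def filterlim_at_split)
  then have A: "(((\<lambda>s. - deriv h s) \<circ> real_of_ereal) \<longlongrightarrow> - deriv h t) (at_right (ereal t))"
    unfolding ereal_tendsto_simps1 .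
  have B: "(((\<lambda>s. - deriv h s) \<circ> real_of_ereal) \<longlongrightarrow> - L) (at_left \<infinity>)"
    unfolding ereal_tendsto_simps1 by (rule tendsto_minus[OF lim])
  note FTC = interval_integral_FTC_nonneg[of "ereal t" \<infinity>, OF _ F C N A B]
  show "set_integrable lborel {t<..} (\<lambda>s. - deriv (deriv h) s)"
    and "(LBINT s=ereal t..\<infinity>. - deriv (deriv h) s) = deriv h t - L"
    using FTC by simp_all
qed

lemma bernstein_head_integral:
  assumes bh: "bernstein h" and lim: "(h \<longlongrightarrow> B) (at_right 0)"
    and lim': "((\<lambda>s. s * deriv h s) \<longlongrightarrow> 0) (at_right 0)" and t: "t > 0"
  shows "set_integrable lborel {0<..<t} (\<lambda>s. s * - deriv (deriv h) s)"
    and "(LBINT s=ereal 0..ereal t. s * - deriv (deriv h) s) = h t - t * deriv h t - B"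
proof -
  have F: "DERIV (\<lambda>s. h s - s * deriv h s) x :> x * - deriv (deriv h) x" if "ereal 0 < ereal x" for x
  proof -
    have x: "x > 0" using that by simp
    have "DERIV (\<lambda>s. h s - s * deriv h s) x :> deriv h x - (1 * deriv h x + deriv (deriv h) x * x)"
      by (intro DERIV_diff DERIV_mult DERIV_ident bernstein_derivatives(1,2)[OF bh x])
    then show ?thesis by (simp add: algebra_simps)
  qed
  have C: "isCont (\<lambda>s. s * - deriv (deriv h) s) x" if "ereal 0 < ereal x" for x
    using that bernstein_derivatives(3)[OF bh] by (simp add: continuous_mult continuous_minus)
  have N: "AE x in lborel. ereal 0 < ereal x \<longrightarrow> ereal x < ereal t \<longrightarrow> 0 \<le> x * - deriv (deriv h) x"
    using bernstein_derivatives(5)[OF bh] by (intro AE_I2) (auto simp: mult_nonneg_nonpos)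
  have "((\<lambda>s. h s - s * deriv h s) \<longlongrightarrow> B - 0) (at_right 0)"
    by (intro tendsto_diff lim lim')
  then have A: "(((\<lambda>s. h s - s * deriv h s) \<circ> real_of_ereal) \<longlongrightarrow> B) (at_right (ereal 0))"
    unfolding ereal_tendsto_simps1 by simp
  have "isCont (\<lambda>s. h s - s * deriv h s) t"
    using DERIV_isCont[OF bernstein_derivatives(1)[OF bh t]]
      DERIV_isCont[OF bernstein_derivatives(2)[OF bh t]]
    by (intro continuous_intros)
  then have "((\<lambda>s. h s - s * deriv h s) \<longlongrightarrow> h t - t * deriv h t) (at_left t)"
    by (simp add: isCont_def filterlim_at_split)
  then have B: "(((\<lambda>s. h s - s * deriv h s) \<circ> real_of_ereal) \<longlongrightarrow> h t - t * deriv h t) (at_left (ereal t))"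
    unfolding ereal_tendsto_simps1 .
  note FTC = interval_integral_FTC_nonneg[of "ereal 0" "ereal t", OF _ F C N A B]
  show "set_integrable lborel {0<..<t} (\<lambda>s. s * - deriv (deriv h) s)"
    and "(LBINT s=ereal 0..ereal t. s * - deriv (deriv h) s) = h t - t * deriv h t - B"
    using FTC t by simp_all
qed

lemma levy_integrable_of_head_tail:
  fixes m :: "real \<Rightarrow> real"
  assumes cm: "continuous_on {0<..} m" and nn: "\<forall>s>0. m s \<ge> 0"
    and head: "set_integrable lborel {0<..<2} (\<lambda>s. s * m s)"
    and tail: "set_integrable lborel {1<..} m"
  shows "set_integrable lborel {0<..} (\<lambda>s. s / (1 + s) * m s)"
proof -
  have meas: "set_borel_measurable lborel A (\<lambda>s. s / (1 + s) * m s)" if "open A" "A \<subseteq> {0<..}" for A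
    using that by (intro set_borel_measurable_continuous_on_open continuous_intros
        continuous_on_subset[OF cm]) auto
  have "set_integrable lborel {0<..<2} (\<lambda>s. s / (1 + s) * m s)"
  proof (rule set_integrable_bound[OF head meas])
    show "AE x in lborel. x \<in> {0<..<2} \<longrightarrow> norm (x / (1 + x) * m x) \<le> norm (x * m x)"
    proof (intro AE_I2 impI)
      fix x :: real assume "x \<in> {0<..<2}"
      then have x: "x > 0" "m x \<ge> 0" using nn by auto
      have "x / (1 + x) \<le> x" using x by (simp add: divide_le_eq algebra_simps)
      then have "x / (1 + x) * m x \<le> x * m x" using x by (intro mult_right_mono) auto
      then show "norm (x / (1 + x) * m x) \<le> norm (x * m x)" using x by simp
    qed
  qed auto
  moreover have "set_integrable lborel {1<..} (\<lambda>s. s / (1 + s) * m s)"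
  proof (rule set_integrable_bound[OF tail meas])
    show "AE x in lborel. x \<in> {1<..} \<longrightarrow> norm (x / (1 + x) * m x) \<le> norm (m x)"
    proof (intro AE_I2 impI)
      fix x :: real assume "x \<in> {1<..}"
      then have x: "x > 0" "m x \<ge> 0" using nn by auto
      have "x / (1 + x) \<le> 1" using x by (simp add: divide_le_eq)
      then show "norm (x / (1 + x) * m x) \<le> norm (m x)"
        using x mult_right_mono[of "x / (1 + x)" 1 "m x"] by simp
    qed
  qed auto
  ultimately have "set_integrable lborel ({0<..<2} \<union> {1<..}) (\<lambda>s. s / (1 + s) * m s)"
    by (rule set_integrable_Un) auto
  moreover have "{0<..<2} \<union> {1<..} = ({0<..} :: real set)" by auto
  ultimately show ?thesis by simp
qed

subsection \<open>The converse direction\<close>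

text \<open>Every Bernstein function \<open>h\<close> is \<open>t r[g](t)\<close> for the complete Bernstein function with
  triple \<open>(2 h'(\<infinity>), h(0+), - h'')\<close>.\<close>

lemma bernstein_rate_representation:
  assumes bh: "bernstein h"
  shows "\<exists>g a b m. cbf_triple g a b m \<and> (\<forall>t>0. h t = t * rate_fn a b m t)"
proof -
  define m where "m = (\<lambda>s. - deriv (deriv h) s)"
  have cmm: "completely_monotone m"
    unfolding m_def by (rule completely_monotone_second_derivative[OF bh])
  note cm = completely_monotone_continuous_nonneg(1)[OF cmm]
    and nn = completely_monotone_continuous_nonneg(2)[OF cmm]
  have h_nonneg: "\<And>x. 0 < x \<Longrightarrow> 0 \<le> h x" using bh unfolding bernstein_def by blast
  define B where "B = Inf (h ` {0<..})"
  have lim_B: "(h \<longlongrightarrow> B) (at_right 0)"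
    unfolding B_def by (rule mono_tendsto_Inf_at_right_0[OF bernstein_mono[OF bh] h_nonneg])
  have bdd: "bdd_below (h ` {0<..})" by (rule bdd_belowI[where m=0]) (use h_nonneg in auto)
  have B_le: "B \<le> h x" if "x > 0" for x
    unfolding B_def by (rule cInf_lower) (use that bdd in auto)
  have B_nonneg: "B \<ge> 0" unfolding B_def by (rule cInf_greatest) (use h_nonneg in auto)
  define L where "L = Inf (deriv h ` {0<..})"
  have lim_L: "(deriv h \<longlongrightarrow> L) at_top"
    unfolding L_def by (rule antimono_tendsto_Inf_at_top[OF bernstein_deriv_antimono[OF bh]
        bernstein_derivatives(4)[OF bh]])
  have L_nonneg: "L \<ge> 0"
    unfolding L_def by (rule cInf_greatest) (use bernstein_derivatives(4)[OF bh] in auto)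
  note tail = bernstein_tail_integral[OF bh lim_L, folded m_def]
  have "((\<lambda>s. s * deriv h s) \<longlongrightarrow> 0) (at_right 0)"
    by (rule bernstein_times_deriv_tendsto_0[OF bh lim_B B_le])
  note head = bernstein_head_integral[OF bh lim_B this, folded m_def]
  have levy: "set_integrable lborel {0<..} (\<lambda>s. s / (1 + s) * m s)"
    by (rule levy_integrable_of_head_tail[OF cm nn]) (use head(1)[of 2] tail(1)[of 1] in \<open>simp_all add: m_def\<close>)
  define g where "g z = 2 * L + B * z + (LINT s:{0<..}|lborel. (1 - exp (- s * z)) * m s)" for z
  have "cbf_triple g (2 * L) B m"
    unfolding cbf_triple_def using L_nonneg B_nonneg cmm levy by (simp add: g_def)
  moreover have "h t = t * rate_fn (2 * L) B m t" if t: "t > 0" for t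
  proof -
    have "t * rate_fn (2 * L) B m t
        = 2 * L * t / 2 + B + (LBINT s=ereal 0..ereal t. s * m s) + t * (LBINT s=ereal t..\<infinity>. m s)"
      by (rule rate_fn_decomposition[OF levy cm nn t])
    also have "\<dots> = 2 * L * t / 2 + B + (h t - t * deriv h t - B) + t * (deriv h t - L)"
      using head(2)[OF t] tail(2)[OF t] by (simp add: m_def)
    finally show ?thesis by (simp add: algebra_simps)
  qed
  ultimately show ?thesis by blast
qed

theorem theoremB2:
  fixes r :: "real \<Rightarrow> real"
  assumes "\<forall>t>0. r t > 0"
  shows "(\<exists>g a b m. cbf_triple g a b m \<and> (\<forall>t>0. r t = rate_fn a b m t))
         \<longleftrightarrow> bernstein (\<lambda>t. t * r t)"
proof
  assume "\<exists>g a b m. cbf_triple g a b m \<and> (\<forall>t>0. r t = rate_fn a b m t)"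
  then obtain g a b m where cbf: "cbf_triple g a b m" and r_eq: "\<forall>t>0. r t = rate_fn a b m t"
    by blast
  from cbf have "bernstein (\<lambda>t. t * rate_fn a b m t)" by (rule bernstein_scaled_rate_fn)
  then show "bernstein (\<lambda>t. t * r t)" by (rule bernstein_cong_pos) (simp add: r_eq)
next
  assume "bernstein (\<lambda>t. t * r t)"
  from bernstein_rate_representation[OF this] obtain g a b m where "cbf_triple g a b m"
    and "\<forall>t>0. t * r t = t * rate_fn a b m t" by blast
  then show "\<exists>g a b m. cbf_triple g a b m \<and> (\<forall>t>0. r t = rate_fn a b m t)" by auto
qed

end
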